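(* Let $V=\{v_\varepsilon\}_{\varepsilon\in(B,0)}\subset\mathrm{Vect}^*S^2$ be a smooth local family of vector fields. Then both $ELBS(v_0)$ and $LBS(V)$ are closed $v_0$-invariant subsets of $S^2$.
   Context: $\mathrm{Vect}^*S^2$: $C^\infty$ vector fields on $S^2$ with isolated singular points each satisfying a Lojasiewicz inequality, and finitely many cycles. A separatrix is a phase curve containing one of the two bounding curves of a hyperbolic sector of a singular point. A singular point is hyperbolic if both eigenvalues have nonzero real part. A nest is a maximal set of nested limit cycles with no singular points between them; a limit cycle is semi-stable if its Poincaré map in a suitable transversal coordinate satisfies $P(0)=0$, $P(x)>x$ for $x\ne0$. A limit cycle is non-interesting if its nest contains an attracting or repelling limit cycle, or all cycles in its nest are semi-stable and inside the innermost or outside the outermost cycle there is only one singular point, which is hyperbolic. An $\alpha$- (resp. $\omega$-) limit set of a nonsingular point is non-interesting if it is a hyperbolic repelling (resp. attracting) singular point or a non-interesting limit cycle, otherwise interesting. $ELBS(v)$ = union of non-hyperbolic singular points, non-hyperbolic limit cycles, and the closure of the set of nonsingular points whose $\alpha$- and $\omega$-limit sets are both interesting. A smooth local family $V=\{v_\varepsilon\}_{\varepsilon\in(B,0)}$ ($B\subset\mathbb R^n$ an open ball) is the germ at $\varepsilon=0$ of a smooth family; $V\subset\mathrm{Vect}^*S^2$ means every $v_\varepsilon$ lies there. $\mathrm{Sing}\,V,\mathrm{Per}\,V,\mathrm{Sep}\,V\subset B\times S^2$ are the unions over $\varepsilon$ of singular points, limit cycles, separatrices of $v_\varepsilon$;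 $\{\varepsilon=0\}\times S^2\cong S^2$. $LBS(V)=ELBS(v_0)\cap\big(\mathrm{Sing}\,v_0\cup((\overline{\mathrm{Per}\,V}\cup\overline{\mathrm{Sep}\,V})\cap\{\varepsilon=0\})\big)$. *)

theory Defs
  imports "HOL-Analysis.Analysis"
begin

type_synonym pt = "real ^ 3"

definition S2 :: "pt set" where
  "S2 = sphere 0 1"

fun Ck_on :: "nat \<Rightarrow> 'a::euclidean_space set \<Rightarrow> ('a \<Rightarrow> 'b::euclidean_space) \<Rightarrow> bool" where
  "Ck_on 0 S f = continuous_on S f"
| "Ck_on (Suc k) S f =
     (\<exists>f'. (\<forall>x\<in>S. (f has_derivative f' x) (at x)) \<and>
           (\<forall>i\<in>Basis. Ck_on k S (\<lambda>x. f' x i)))"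

definition smooth_on :: "'a::euclidean_space set \<Rightarrow> ('a \<Rightarrow> 'b::euclidean_space) \<Rightarrow> bool" where
  "smooth_on S f \<longleftrightarrow> open S \<and> (\<forall>k. Ck_on k S f)"

definition smooth_vf :: "(pt \<Rightarrow> pt) \<Rightarrow> bool" where
  "smooth_vf v \<longleftrightarrow> (\<exists>U. S2 \<subseteq> U \<and> smooth_on U v) \<and> (\<forall>x\<in>S2. v x \<bullet> x = 0)"

definition is_solution :: "(pt \<Rightarrow> pt) \<Rightarrow> (real \<Rightarrow> pt) \<Rightarrow> bool" where
  "is_solution v \<gamma> \<longleftrightarrow> (\<forall>s. \<gamma> s \<in> S2 \<and> (\<gamma> has_vector_derivative v (\<gamma> s)) (at s))"

text \<open>The (global, unique for smooth fields) flow on the compact manifold S^2.\<close>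
definition flow :: "(pt \<Rightarrow> pt) \<Rightarrow> real \<Rightarrow> pt \<Rightarrow> pt" where
  "flow v t x = (SOME \<gamma>. is_solution v \<gamma> \<and> \<gamma> 0 = x) t"

definition orbit :: "(pt \<Rightarrow> pt) \<Rightarrow> pt \<Rightarrow> pt set" where
  "orbit v x = range (\<lambda>t. flow v t x)"

definition invariant :: "(pt \<Rightarrow> pt) \<Rightarrow> pt set \<Rightarrow> bool" where
  "invariant v A \<longleftrightarrow> A \<subseteq> S2 \<and> (\<forall>x\<in>A. \<forall>t. flow v t x \<in> A)"

definition omega_limit :: "(pt \<Rightarrow> pt) \<Rightarrow> pt \<Rightarrow> pt set" where
  "omega_limit v x = {y. \<exists>ts. filterlim ts at_top sequentially \<and>
                              (\<lambda>n. flow v (ts n) x) \<longlonglongrightarrow> y}"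

definition alpha_limit :: "(pt \<Rightarrow> pt) \<Rightarrow> pt \<Rightarrow> pt set" where
  "alpha_limit v x = {y. \<exists>ts. filterlim ts at_bot sequentially \<and>
                              (\<lambda>n. flow v (ts n) x) \<longlonglongrightarrow> y}"

definition sing :: "(pt \<Rightarrow> pt) \<Rightarrow> pt set" where
  "sing v = {p\<in>S2. v p = 0}"

text \<open>a + i b is an eigenvalue of the linear map L restricted to the tangent plane
  T_p S^2 = p^perp (complex eigenvector u + i w).\<close>
definition tangent_eigenvalue :: "(pt \<Rightarrow> pt) \<Rightarrow> pt \<Rightarrow> real \<Rightarrow> real \<Rightarrow> bool" where
  "tangent_eigenvalue L p a b \<longleftrightarrow>
     (\<exists>u w. u \<bullet> p = 0 \<and> w \<bullet> p = 0 \<and> (u \<noteq> 0 \<or> w \<noteq> 0) \<and>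
            L u = a *\<^sub>R u - b *\<^sub>R w \<and> L w = b *\<^sub>R u + a *\<^sub>R w)"

definition hyp_sing :: "(pt \<Rightarrow> pt) \<Rightarrow> pt \<Rightarrow> bool" where
  "hyp_sing v p \<longleftrightarrow> p \<in> sing v \<and>
     (\<exists>L. (v has_derivative L) (at p) \<and> (\<forall>a b. tangent_eigenvalue L p a b \<longrightarrow> a \<noteq> 0))"

definition hyp_attracting_sing :: "(pt \<Rightarrow> pt) \<Rightarrow> pt \<Rightarrow> bool" where
  "hyp_attracting_sing v p \<longleftrightarrow> p \<in> sing v \<and>
     (\<exists>L. (v has_derivative L) (at p) \<and> (\<forall>a b. tangent_eigenvalue L p a b \<longrightarrow> a < 0))"

definition hyp_repelling_sing :: "(pt \<Rightarrow> pt) \<Rightarrow> pt \<Rightarrow> bool" where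
  "hyp_repelling_sing v p \<longleftrightarrow> p \<in> sing v \<and>
     (\<exists>L. (v has_derivative L) (at p) \<and> (\<forall>a b. tangent_eigenvalue L p a b \<longrightarrow> a > 0))"

definition isolated_sing :: "(pt \<Rightarrow> pt) \<Rightarrow> pt \<Rightarrow> bool" where
  "isolated_sing v p \<longleftrightarrow> (\<exists>d>0. \<forall>q\<in>sing v. dist q p < d \<longrightarrow> q = p)"

definition lojasiewicz :: "(pt \<Rightarrow> pt) \<Rightarrow> pt \<Rightarrow> bool" where
  "lojasiewicz v p \<longleftrightarrow>
     (\<exists>c>0. \<exists>N::nat. \<exists>d>0. \<forall>x\<in>S2. dist x p < d \<longrightarrow> norm (v x) \<ge> c * dist x p ^ N)"

definition cycle :: "(pt \<Rightarrow> pt) \<Rightarrow> pt set \<Rightarrow> bool" where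
  "cycle v C \<longleftrightarrow> (\<exists>x\<in>S2. v x \<noteq> 0 \<and> (\<exists>T>0. flow v T x = x) \<and> C = orbit v x)"

definition limit_cycle :: "(pt \<Rightarrow> pt) \<Rightarrow> pt set \<Rightarrow> bool" where
  "limit_cycle v C \<longleftrightarrow> cycle v C \<and>
     (\<exists>U. open U \<and> C \<subseteq> U \<and> (\<forall>C'. cycle v C' \<and> C' \<subseteq> U \<longrightarrow> C' = C))"

definition vect_star :: "(pt \<Rightarrow> pt) \<Rightarrow> bool" where
  "vect_star v \<longleftrightarrow> smooth_vf v \<and>
     (\<forall>p\<in>sing v. isolated_sing v p \<and> lojasiewicz v p) \<and>
     finite {C. cycle v C}"

definition transversal :: "(pt \<Rightarrow> pt) \<Rightarrow> (real \<Rightarrow> pt) \<Rightarrow> real \<Rightarrow> bool" where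
  "transversal v \<sigma> d \<longleftrightarrow> d > 0 \<and> smooth_on UNIV \<sigma> \<and>
     \<sigma> ` {-d<..<d} \<subseteq> S2 \<and> inj_on \<sigma> {-d<..<d} \<and>
     (\<forall>s\<in>{-d<..<d}. \<forall>a b. a *\<^sub>R vector_derivative \<sigma> (at s) + b *\<^sub>R v (\<sigma> s) = 0
                      \<longrightarrow> a = 0 \<and> b = 0)"

text \<open>P is the Poincare (first return) map on (-e,e) of the section sigma((-d,d)),
  in the transversal coordinate s.\<close>
definition return_map :: "(pt \<Rightarrow> pt) \<Rightarrow> (real \<Rightarrow> pt) \<Rightarrow> real \<Rightarrow> real \<Rightarrow> (real \<Rightarrow> real) \<Rightarrow> bool" where
  "return_map v \<sigma> d e P \<longleftrightarrow> 0 < e \<and> e \<le> d \<and> P 0 = 0 \<and>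
     (\<forall>s\<in>{-e<..<e}. P s \<in> {-d<..<d} \<and>
        (\<exists>\<tau>>0. flow v \<tau> (\<sigma> s) = \<sigma> (P s) \<and>
               (\<forall>t\<in>{0<..<\<tau>}. flow v t (\<sigma> s) \<notin> \<sigma> ` {-d<..<d})))"

definition poincare_at :: "(pt \<Rightarrow> pt) \<Rightarrow> pt set \<Rightarrow> (real \<Rightarrow> pt) \<Rightarrow> real \<Rightarrow> real \<Rightarrow> (real \<Rightarrow> real) \<Rightarrow> bool" where
  "poincare_at v C \<sigma> d e P \<longleftrightarrow> transversal v \<sigma> d \<and> \<sigma> 0 \<in> C \<and> return_map v \<sigma> d e P"

definition hyp_cycle :: "(pt \<Rightarrow> pt) \<Rightarrow> pt set \<Rightarrow> bool" where
  "hyp_cycle v C \<longleftrightarrow> (\<exists>\<sigma> d e P D. poincare_at v C \<sigma> d e P \<and>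
                              (P has_real_derivative D) (at 0) \<and> D \<noteq> 1)"

definition semistable_cycle :: "(pt \<Rightarrow> pt) \<Rightarrow> pt set \<Rightarrow> bool" where
  "semistable_cycle v C \<longleftrightarrow> (\<exists>\<sigma> d e P. poincare_at v C \<sigma> d e P \<and>
                              (\<forall>s\<in>{-e<..<e}. s \<noteq> 0 \<longrightarrow> P s > s))"

definition attracting_cycle :: "(pt \<Rightarrow> pt) \<Rightarrow> pt set \<Rightarrow> bool" where
  "attracting_cycle v C \<longleftrightarrow> limit_cycle v C \<and>
     (\<exists>U. open U \<and> C \<subseteq> U \<and> (\<forall>x\<in>U \<inter> S2. omega_limit v x = C))"

definition repelling_cycle :: "(pt \<Rightarrow> pt) \<Rightarrow> pt set \<Rightarrow> bool" where
  "repelling_cycle v C \<longleftrightarrow> limit_cycle v C \<and>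
     (\<exists>U. open U \<and> C \<subseteq> U \<and> (\<forall>x\<in>U \<inter> S2. alpha_limit v x = C))"

text \<open>The open annulus between two disjoint cycles: the union of the components of
  S^2 minus both cycles whose closure meets both of them.\<close>
definition between :: "pt set \<Rightarrow> pt set \<Rightarrow> pt set" where
  "between C1 C2 = \<Union>{K \<in> components (S2 - (C1 \<union> C2)).
                       closure K \<inter> C1 \<noteq> {} \<and> closure K \<inter> C2 \<noteq> {}}"

definition nest :: "(pt \<Rightarrow> pt) \<Rightarrow> pt set \<Rightarrow> pt set set" where
  "nest v C = {C'. limit_cycle v C' \<and> (C' = C \<or> between C C' \<inter> sing v = {})}"

definition nest_region :: "pt set set \<Rightarrow> pt set" where
  "nest_region N = \<Union>N \<union> \<Union>{between C C' |C C'. C \<in> N \<and> C' \<in> N \<and> C \<noteq> C'}"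

text \<open>The two complementary components of the nest region are the inside of the
  innermost and the outside of the outermost cycle.\<close>
definition noninteresting_cycle :: "(pt \<Rightarrow> pt) \<Rightarrow> pt set \<Rightarrow> bool" where
  "noninteresting_cycle v C \<longleftrightarrow> limit_cycle v C \<and>
     ((\<exists>C'\<in>nest v C. attracting_cycle v C' \<or> repelling_cycle v C') \<or>
      ((\<forall>C'\<in>nest v C. semistable_cycle v C') \<and>
       (\<exists>D\<in>components (S2 - nest_region (nest v C)).
           \<exists>p. D \<inter> sing v = {p} \<and> hyp_sing v p)))"

definition noninteresting_omega :: "(pt \<Rightarrow> pt) \<Rightarrow> pt \<Rightarrow> bool" where
  "noninteresting_omega v x \<longleftrightarrow>
     (\<exists>p. omega_limit v x = {p} \<and> hyp_sing v p \<and> hyp_attracting_sing v p) \<or>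
     noninteresting_cycle v (omega_limit v x)"

definition noninteresting_alpha :: "(pt \<Rightarrow> pt) \<Rightarrow> pt \<Rightarrow> bool" where
  "noninteresting_alpha v x \<longleftrightarrow>
     (\<exists>p. alpha_limit v x = {p} \<and> hyp_sing v p \<and> hyp_repelling_sing v p) \<or>
     noninteresting_cycle v (alpha_limit v x)"

definition ELBS :: "(pt \<Rightarrow> pt) \<Rightarrow> pt set" where
  "ELBS v = {p \<in> sing v. \<not> hyp_sing v p}
          \<union> \<Union>{C. limit_cycle v C \<and> \<not> hyp_cycle v C}
          \<union> closure {x \<in> S2. v x \<noteq> 0 \<and> \<not> noninteresting_alpha v x \<and> \<not> noninteresting_omega v x}"

text \<open>A hyperbolic sector of the singular point p bounded by the half-orbits
  gamma1 = {flow t x1 | t >= 0} (tending to p as t -> +oo) and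
  gamma2 = {flow t x2 | t <= 0} (tending to p as t -> -oo): a closed disk H in S^2
  whose boundary is gamma1 \<union> gamma2 \<union> {p} \<union> A, with A an arc from x1 to x2,
  such that every trajectory through H minus its bounding curves leaves H in both
  time directions.\<close>
definition hyp_sector :: "(pt \<Rightarrow> pt) \<Rightarrow> pt \<Rightarrow> pt \<Rightarrow> pt \<Rightarrow> bool" where
  "hyp_sector v p x1 x2 \<longleftrightarrow> p \<in> sing v \<and> x1 \<in> S2 \<and> x2 \<in> S2 \<and> v x1 \<noteq> 0 \<and> v x2 \<noteq> 0 \<and>
     ((\<lambda>t. flow v t x1) \<longlongrightarrow> p) at_top \<and> ((\<lambda>t. flow v t x2) \<longlongrightarrow> p) at_bot \<and>
     (let g1 = (\<lambda>t. flow v t x1) ` {0..}; g2 = (\<lambda>t. flow v t x2) ` {..0} in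
      \<exists>H A. H \<subseteq> S2 \<and> H homeomorphic (cball (0::real^2) 1) \<and>
        arc A \<and> pathstart A = x1 \<and> pathfinish A = x2 \<and>
        path_image A \<inter> (g1 \<union> g2 \<union> {p}) = {x1, x2} \<and>
        H \<inter> closure (S2 - H) = g1 \<union> g2 \<union> {p} \<union> path_image A \<and>
        (\<forall>y \<in> H - (g1 \<union> g2 \<union> {p}). (\<exists>t>0. flow v t y \<notin> H) \<and> (\<exists>t<0. flow v t y \<notin> H)))"

definition Sep :: "(pt \<Rightarrow> pt) \<Rightarrow> pt set" where
  "Sep v = \<Union>{orbit v x |x. \<exists>p y. hyp_sector v p x y \<or> hyp_sector v p y x}"

text \<open>A smooth family on the ball B = ball 0 r in R^n: jointly smooth in (eps, x) on
  an open neighbourhood of B x S^2, with every member in Vect*.\<close>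
definition family_star :: "real \<Rightarrow> (real^'n \<Rightarrow> pt \<Rightarrow> pt) \<Rightarrow> bool" where
  "family_star r V \<longleftrightarrow> r > 0 \<and>
     (\<exists>U. ball 0 r \<times> S2 \<subseteq> U \<and> smooth_on U (\<lambda>(e, x). V e x)) \<and>
     (\<forall>e\<in>ball 0 r. vect_star (V e))"

definition SingF :: "real \<Rightarrow> (real^'n \<Rightarrow> pt \<Rightarrow> pt) \<Rightarrow> ((real^'n) \<times> pt) set" where
  "SingF r V = {(e, x). e \<in> ball 0 r \<and> x \<in> sing (V e)}"

definition PerF :: "real \<Rightarrow> (real^'n \<Rightarrow> pt \<Rightarrow> pt) \<Rightarrow> ((real^'n) \<times> pt) set" where
  "PerF r V = {(e, x). e \<in> ball 0 r \<and> (\<exists>C. limit_cycle (V e) C \<and> x \<in> C)}"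

definition SepF :: "real \<Rightarrow> (real^'n \<Rightarrow> pt \<Rightarrow> pt) \<Rightarrow> ((real^'n) \<times> pt) set" where
  "SepF r V = {(e, x). e \<in> ball 0 r \<and> x \<in> Sep (V e)}"

definition LBS :: "real \<Rightarrow> (real^'n \<Rightarrow> pt \<Rightarrow> pt) \<Rightarrow> pt set" where
  "LBS r V = ELBS (V 0) \<inter>
     (sing (V 0) \<union> {x. (0, x) \<in> closure (PerF r V) \<union> closure (SepF r V)})"

end

theory Submission
  imports Defs
begin

(* The flow is defined by choosing a solution, so one first shows that it is a genuine flow:
   solutions exist for all time (Picard iteration in a weighted sup norm, applied to the radial
   extension of the field) and are unique (Gronwall). ELBS v is closed because singular points
   are isolated, hence finitely many, and there are finitely many cycles, each compact. It is
   invariant because singular points are fixed, cycles are orbits, and alpha- and omega-limit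
   sets do not change along an orbit; taking the closure preserves invariance by continuity of
   the time-t map. For LBS one needs in addition that the slice at eps = 0 of the closure of
   Per V and of Sep V is invariant: both sets are invariant under the flow of every member of
   the family, and the flow depends continuously on (eps, x) at eps = 0, again by Gronwall. *)

section \<open>Smooth vector fields on the sphere\<close>

lemma mem_S2_iff: "x \<in> S2 \<longleftrightarrow> norm x = 1"
  by (simp add: S2_def)

lemma compact_S2: "compact S2"
  by (simp add: S2_def)

lemma closed_S2: "closed S2"
  by (simp add: S2_def)

lemma smooth_vf_C1E:
  assumes "smooth_vf v"
  obtains U f' where "open U" "S2 \<subseteq> U" "continuous_on U v"
    "\<And>x. x \<in> U \<Longrightarrow> (v has_derivative f' x) (at x)"
    "\<And>i. i \<in> Basis \<Longrightarrow> continuous_on U (\<lambda>x. f' x i)"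
proof -
  obtain U where U: "S2 \<subseteq> U" "open U" "\<forall>k. Ck_on k U v"
    using assms by (auto simp: smooth_vf_def smooth_on_def)
  from U(3) have "Ck_on 0 U v" "Ck_on (Suc 0) U v" by blast+
  with U(1,2) that show ?thesis by (metis Ck_on.simps)
qed

lemma continuous_on_smooth_vf: "smooth_vf v \<Longrightarrow> continuous_on S2 v"
  by (metis smooth_vf_C1E continuous_on_subset)

lemma smooth_vf_bounded:
  assumes "smooth_vf v"
  obtains M where "\<And>x. x \<in> S2 \<Longrightarrow> norm (v x) \<le> M"
  using compact_continuous_image[OF continuous_on_smooth_vf[OF assms] compact_S2]
  by (metis compact_imp_bounded bounded_iff image_eqI)

lemma smooth_vf_lipschitz:
  assumes "smooth_vf v"
  obtains L where "L-lipschitz_on S2 v"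
proof -
  obtain U f' where U: "open U" "S2 \<subseteq> U"
    and f': "\<And>x. x \<in> U \<Longrightarrow> (v has_derivative f' x) (at x)"
    and f'_cont: "\<And>i. i \<in> Basis \<Longrightarrow> continuous_on U (\<lambda>x. f' x i)"
    using smooth_vf_C1E[OF assms] by metis
  have Blinfun_f': "blinfun_apply (Blinfun (f' x)) = f' x" if "x \<in> U" for x
    using f'[OF that] by (simp add: has_derivative_bounded_linear bounded_linear_Blinfun_apply)
  have "local_lipschitz UNIV U (\<lambda>_::real. v)"
  proof (rule c1_implies_local_lipschitz[where f' = "\<lambda>y. Blinfun (f' (snd y))"])
    show "continuous_on (UNIV \<times> U) (\<lambda>y::real \<times> pt. Blinfun (f' (snd y)))"
    proof (rule continuous_on_blinfun_componentwise)
      fix i :: pt assume "i \<in> Basis"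
      have "continuous_on (UNIV \<times> U) ((\<lambda>x. f' x i) \<circ> snd)"
        by (rule continuous_on_compose[OF continuous_on_snd]) (use f'_cont[OF \<open>i \<in> Basis\<close>] in auto)
      then show "continuous_on (UNIV \<times> U) (\<lambda>y. blinfun_apply (Blinfun (f' (snd y))) i)"
        by (rule continuous_on_eq) (auto simp: Blinfun_f')
    qed
  qed (use U f' Blinfun_f' in auto)
  then have "local_lipschitz {0} S2 (\<lambda>_::real. v)"
    by (rule local_lipschitz_subset) (use U in auto)
  from local_lipschitz_compact_implies_lipschitz[OF this compact_S2 compact_sing] that
  show ?thesis by auto
qed

section \<open>Gronwall's inequality\<close>

lemma has_real_derivative_inner_self:
  fixes g :: "real \<Rightarrow> 'a::real_inner"
  assumes "(g has_vector_derivative d) (at s)"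
  shows "((\<lambda>s. g s \<bullet> g s) has_real_derivative 2 * (g s \<bullet> d)) (at s)"
proof -
  have "((\<lambda>s. g s \<bullet> g s) has_derivative (\<lambda>h. g s \<bullet> (h *\<^sub>R d) + (h *\<^sub>R d) \<bullet> g s)) (at s)"
    using assms unfolding has_vector_derivative_def by (intro has_derivative_inner) auto
  moreover have "(\<lambda>h. g s \<bullet> (h *\<^sub>R d) + (h *\<^sub>R d) \<bullet> g s) = (*) (2 * (g s \<bullet> d))"
    by (auto simp: inner_commute algebra_simps)
  ultimately show ?thesis by (simp add: has_field_derivative_def)
qed

lemma gronwall_forward:
  fixes u :: "real \<Rightarrow> real"
  assumes deriv: "\<And>s. (u has_real_derivative u' s) (at s)"
    and bound: "\<And>s. u' s \<le> K * (u s + c)" and "t0 \<le> t"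
  shows "u t + c \<le> exp (K * (t - t0)) * (u t0 + c)"
proof -
  let ?\<psi> = "\<lambda>s. exp (- K * (s - t0)) * (u s + c)"
  have "?\<psi> t \<le> ?\<psi> t0"
  proof (rule DERIV_nonpos_imp_nonincreasing[OF \<open>t0 \<le> t\<close>])
    fix s
    have "(?\<psi> has_real_derivative exp (- K * (s - t0)) * (u' s - K * (u s + c))) (at s)"
      by (auto intro!: derivative_eq_intros deriv simp: algebra_simps)
    moreover have "exp (- K * (s - t0)) * (u' s - K * (u s + c)) \<le> 0"
      using bound[of s] by (simp add: mult_nonneg_nonpos)
    ultimately show "\<exists>y. (?\<psi> has_real_derivative y) (at s) \<and> y \<le> 0" by blast
  qed
  then have "exp (K * (t - t0)) * ?\<psi> t \<le> exp (K * (t - t0)) * (u t0 + c)"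
    by (simp add: mult_left_mono)
  then show ?thesis by (simp add: mult.assoc[symmetric] exp_add[symmetric])
qed

lemma gronwall_two_sided:
  fixes u :: "real \<Rightarrow> real"
  assumes deriv: "\<And>s. (u has_real_derivative u' s) (at s)"
    and bound: "\<And>s. \<bar>u' s\<bar> \<le> K * (u s + c)"
  shows "u t + c \<le> exp (K * \<bar>t - t0\<bar>) * (u t0 + c)"
proof (cases "t0 \<le> t")
  case True
  have "u t + c \<le> exp (K * (t - t0)) * (u t0 + c)"
    by (rule gronwall_forward[OF deriv _ True]) (use bound abs_ge_self order_trans in blast)
  with True show ?thesis by simp
next
  case False
  have "u (- (- t)) + c \<le> exp (K * (- t - - t0)) * (u (- (- t0)) + c)"
  proof (rule gronwall_forward[where u = "\<lambda>s. u (- s)" and u' = "\<lambda>s. - u' (- s)"])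
    show "((\<lambda>s. u (- s)) has_real_derivative - u' (- s)) (at s)" for s
      using DERIV_mirror[of u "u' (- s)" s] deriv[of "- s"] by simp
    show "- u' (- s) \<le> K * (u (- s) + c)" for s
      using bound[of "- s"] by linarith
  qed (use False in simp)
  with False show ?thesis by simp
qed

lemma gronwall_dist:
  fixes g1 g2 :: "real \<Rightarrow> 'a::real_inner"
  assumes g1: "\<And>s. (g1 has_vector_derivative d1 s) (at s)"
    and g2: "\<And>s. (g2 has_vector_derivative d2 s) (at s)"
    and bound: "\<And>s. norm (d1 s - d2 s) \<le> L * norm (g1 s - g2 s) + \<delta>" and "L \<ge> 0"
  shows "norm (g1 t - g2 t)^2 \<le> exp ((2*L + 1) * \<bar>t - t0\<bar>) * (norm (g1 t0 - g2 t0)^2 + \<delta>^2)"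
proof -
  define e where "e s = g1 s - g2 s" for s
  define u' where "u' s = 2 * (e s \<bullet> (d1 s - d2 s))" for s
  have u: "norm (e s)^2 = e s \<bullet> e s" for s
    by (simp add: power2_norm_eq_inner)
  have "((\<lambda>s. norm (e s)^2) has_real_derivative u' s) (at s)" for s
    unfolding u unfolding u'_def e_def
    by (rule has_real_derivative_inner_self[OF has_vector_derivative_diff[OF g1 g2]])
  moreover have "\<bar>u' s\<bar> \<le> (2*L + 1) * (norm (e s)^2 + \<delta>^2)" for s
  proof -
    have "\<bar>u' s\<bar> \<le> 2 * (norm (e s) * norm (d1 s - d2 s))"
      unfolding u'_def using Cauchy_Schwarz_ineq2[of "e s" "d1 s - d2 s"] by simp
    also have "\<dots> \<le> 2 * (norm (e s) * (L * norm (e s) + \<delta>))"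
      using bound[of s] by (simp add: e_def mult_left_mono)
    also have "\<dots> \<le> 2 * L * norm (e s)^2 + (norm (e s)^2 + \<delta>^2)"
      using sum_squares_bound[of "norm (e s)" \<delta>] by (simp add: algebra_simps power2_eq_square)
    also have "\<dots> \<le> (2*L + 1) * (norm (e s)^2 + \<delta>^2)"
      using \<open>L \<ge> 0\<close> by (simp add: algebra_simps)
    finally show ?thesis .
  qed
  ultimately have "norm (e t)^2 + \<delta>^2 \<le> exp ((2*L + 1) * \<bar>t - t0\<bar>) * (norm (e t0)^2 + \<delta>^2)"
    by (rule gronwall_two_sided)
  then show ?thesis
    using zero_le_power2[of \<delta>] unfolding e_def by linarith
qed

section \<open>Global solutions of Lipschitz equations\<close>

definition oriented_integral :: "(real \<Rightarrow> 'a::banach) \<Rightarrow> real \<Rightarrow> 'a" where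
  "oriented_integral h t = integral {0..t} h - integral {t..0} h"

lemma integrable_on_continuous_UNIV:
  "continuous_on UNIV (h :: real \<Rightarrow> 'a::banach) \<Longrightarrow> h integrable_on {a..b}"
  by (rule integrable_continuous_interval) (rule continuous_on_subset, auto)

lemma oriented_integral_eq_diff:
  fixes h :: "real \<Rightarrow> 'a::banach"
  assumes "continuous_on UNIV h" "a \<le> 0" "a \<le> t"
  shows "oriented_integral h t = integral {a..t} h - integral {a..0} h"
proof (cases "0 \<le> t")
  case True
  then have "integral {t..0} h = 0"
    by (cases "t = 0") auto
  moreover have "integral {a..0} h + integral {0..t} h = integral {a..t} h"
    using assms True by (intro Henstock_Kurzweil_Integration.integral_combine integrable_on_continuous_UNIV) auto
  ultimately show ?thesis by (simp add: oriented_integral_def algebra_simps)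
next
  case False
  then have "{0..t} = {}" by auto
  moreover have "integral {a..t} h + integral {t..0} h = integral {a..0} h"
    using assms False by (intro Henstock_Kurzweil_Integration.integral_combine integrable_on_continuous_UNIV) auto
  ultimately show ?thesis by (simp add: oriented_integral_def algebra_simps)
qed

lemma has_vector_derivative_oriented_integral:
  fixes h :: "real \<Rightarrow> 'a::banach"
  assumes h: "continuous_on UNIV h"
  shows "(oriented_integral h has_vector_derivative h t) (at t)"
proof -
  define a where "a = - \<bar>t\<bar> - 1"
  have t: "t \<in> {a<..<\<bar>t\<bar> + 1}" by (auto simp: a_def)
  have "((\<lambda>u. integral {a..u} h) has_vector_derivative h t) (at t within {a..\<bar>t\<bar> + 1})"
    by (rule integral_has_vector_derivative) (use continuous_on_subset[OF h] t in auto)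
  then have "((\<lambda>u. integral {a..u} h - integral {a..0} h) has_vector_derivative h t) (at t)"
    using at_within_interior[of t "{a..\<bar>t\<bar> + 1}"] t
    by (intro has_vector_derivative_diff[where g' = 0, simplified]) auto
  then show ?thesis
  proof (rule has_vector_derivative_transform_within_open[where S = "{a<..<\<bar>t\<bar> + 1}"])
    show "integral {a..s} h - integral {a..0} h = oriented_integral h s" if "s \<in> {a<..<\<bar>t\<bar> + 1}" for s
      using that by (intro oriented_integral_eq_diff[OF h, symmetric]) (auto simp: a_def)
  qed (use t in auto)
qed

lemma oriented_integral_diff:
  fixes h1 h2 :: "real \<Rightarrow> 'a::banach"
  assumes "continuous_on UNIV h1" "continuous_on UNIV h2"
  shows "oriented_integral (\<lambda>s. h1 s - h2 s) t = oriented_integral h1 t - oriented_integral h2 t"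
  using integrable_on_continuous_UNIV[OF assms(1)] integrable_on_continuous_UNIV[OF assms(2)]
  by (simp add: oriented_integral_def integral_diff algebra_simps)

lemma norm_integral_exp_bound:
  fixes h :: "real \<Rightarrow> 'a::banach"
  assumes h: "continuous_on {0..t} h" and "K > 0" "t \<ge> 0"
    and bound: "\<And>s. s \<in> {0..t} \<Longrightarrow> norm (h s) \<le> C * exp (K * s)"
  shows "norm (integral {0..t} h) \<le> C / K * exp (K * t)"
proof -
  have "C \<ge> 0"
    using bound[of 0] \<open>t \<ge> 0\<close> by (simp add: order_trans[OF norm_ge_zero])
  have "((\<lambda>s. C * exp (K * s)) has_integral C / K * exp (K * t) - C / K * exp (K * 0)) {0..t}"
  proof (rule fundamental_theorem_of_calculus[OF \<open>t \<ge> 0\<close>])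
    fix s
    have "((\<lambda>s. C / K * exp (K * s)) has_real_derivative C * exp (K * s)) (at s)"
      using \<open>K > 0\<close> by (auto intro!: derivative_eq_intros)
    then show "((\<lambda>s. C / K * exp (K * s)) has_vector_derivative C * exp (K * s)) (at s within {0..t})"
      by (simp add: has_real_derivative_iff_has_vector_derivative[symmetric] has_field_derivative_at_within)
  qed
  then have "integral {0..t} (\<lambda>s. C * exp (K * s)) = C / K * exp (K * t) - C / K"
    by (rule trans[OF integral_unique]) simp
  moreover have "norm (integral {0..t} h) \<le> integral {0..t} (\<lambda>s. C * exp (K * s))"
    by (rule integral_norm_bound_integral[OF integrable_continuous_interval[OF h] _ bound])
       (auto intro!: integrable_continuous_interval continuous_intros)
  moreover have "C / K \<ge> 0"
    using \<open>C \<ge> 0\<close> \<open>K > 0\<close> by simp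
  ultimately show ?thesis by linarith
qed

lemma norm_oriented_integral_exp_bound:
  fixes h :: "real \<Rightarrow> 'a::banach"
  assumes h: "continuous_on UNIV h" and "K > 0"
    and bound: "\<And>s. norm (h s) \<le> C * exp (K * \<bar>s\<bar>)"
  shows "norm (oriented_integral h t) \<le> C / K * exp (K * \<bar>t\<bar>)"
proof (cases "0 \<le> t")
  case True
  then have "oriented_integral h t = integral {0..t} h"
    by (cases "t = 0") (auto simp: oriented_integral_def)
  moreover have "norm (integral {0..t} h) \<le> C / K * exp (K * t)"
  proof (rule norm_integral_exp_bound[OF continuous_on_subset[OF h] \<open>K > 0\<close> True])
    show "norm (h s) \<le> C * exp (K * s)" if "s \<in> {0..t}" for s
      using bound[of s] that by simp
  qed simp
  ultimately show ?thesis using True by simp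
next
  case False
  have "oriented_integral h t = - integral {0..-t} (\<lambda>s. h (- s))"
    using False Henstock_Kurzweil_Integration.integral_reflect_real[of 0 t h] by (simp add: oriented_integral_def)
  moreover have "norm (integral {0..-t} (\<lambda>s. h (- s))) \<le> C / K * exp (K * - t)"
  proof (rule norm_integral_exp_bound[OF _ \<open>K > 0\<close>])
    show "continuous_on {0..-t} (\<lambda>s. h (- s))"
      by (rule continuous_on_compose2[OF h continuous_on_minus[OF continuous_on_id]]) auto
    show "norm (h (- s)) \<le> C * exp (K * s)" if "s \<in> {0..-t}" for s
      using bound[of "- s"] that by simp
  qed (use False in simp)
  ultimately show ?thesis using False by simp
qed

lemma norm_le_lipschitz_on_UNIV:
  assumes "L-lipschitz_on UNIV w"
  shows "norm (w y) \<le> norm (w 0) + L * norm y"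
  using lipschitz_onD[OF assms, of y 0] norm_triangle_sub[of "w y" "w 0"] by (simp add: dist_norm)

(* The Picard operator conjugated by the weight exp (K |t|): its fixed points g give the
   solutions exp (K |t|) g t, and in the weighted sup norm it contracts with factor L / K,
   globally in time. *)
definition weighted_picard :: "real \<Rightarrow> ('a::banach \<Rightarrow> 'a) \<Rightarrow> 'a \<Rightarrow> (real \<Rightarrow> 'a) \<Rightarrow> real \<Rightarrow> 'a" where
  "weighted_picard K w x g t =
     exp (- K * \<bar>t\<bar>) *\<^sub>R (x + oriented_integral (\<lambda>s. w (exp (K * \<bar>s\<bar>) *\<^sub>R g s)) t)"

lemma continuous_on_weighted_integrand:
  fixes w :: "'a::real_normed_vector \<Rightarrow> 'b::topological_space" and g :: "real \<Rightarrow> 'a"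
  assumes "continuous_on UNIV w" "continuous_on UNIV g"
  shows "continuous_on UNIV (\<lambda>s. w (exp (K * \<bar>s\<bar>) *\<^sub>R g s))"
proof (rule continuous_on_compose2[OF assms(1)])
  show "continuous_on UNIV (\<lambda>s. exp (K * \<bar>s\<bar>) *\<^sub>R g s)"
    by (rule continuous_on_scaleR) (intro continuous_intros, rule assms(2))
qed auto

lemma weighted_picard_bcontfun:
  fixes w :: "'a::banach \<Rightarrow> 'a"
  assumes lip: "L-lipschitz_on UNIV w" and "K > 0" and g: "g \<in> bcontfun"
  shows "weighted_picard K w x g \<in> bcontfun"
proof -
  have w: "continuous_on UNIV w"
    using lipschitz_on_continuous_on[OF lip] .
  have g_cont: "continuous_on UNIV g"
    using g by (simp add: bcontfun_def)
  obtain B where B: "\<And>s. norm (g s) \<le> B"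
    using g by (auto simp: bcontfun_def bounded_iff)
  have "L \<ge> 0" "B \<ge> 0"
    using lipschitz_on_nonneg[OF lip] order_trans[OF norm_ge_zero B] by auto
  define C where "C = norm (w 0) + L * B"
  have integrand: "norm (w (exp (K * \<bar>s\<bar>) *\<^sub>R g s)) \<le> C * exp (K * \<bar>s\<bar>)" for s
  proof -
    have "norm (w (exp (K * \<bar>s\<bar>) *\<^sub>R g s)) \<le> norm (w 0) + L * norm (exp (K * \<bar>s\<bar>) *\<^sub>R g s)"
      by (rule norm_le_lipschitz_on_UNIV[OF lip])
    also have "\<dots> \<le> norm (w 0) * exp (K * \<bar>s\<bar>) + L * (exp (K * \<bar>s\<bar>) * B)"
      using mult_left_mono[of 1 "exp (K * \<bar>s\<bar>)" "norm (w 0)"] \<open>K > 0\<close> \<open>L \<ge> 0\<close> B[of s]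
      by (intro add_mono mult_left_mono) auto
    finally show ?thesis by (simp add: C_def algebra_simps)
  qed
  have "norm (weighted_picard K w x g t) \<le> norm x + C / K" for t
  proof -
    have "norm (weighted_picard K w x g t)
        \<le> exp (- K * \<bar>t\<bar>) * (norm x + C / K * exp (K * \<bar>t\<bar>))"
      unfolding weighted_picard_def
      using norm_oriented_integral_exp_bound[OF continuous_on_weighted_integrand[OF w g_cont] \<open>K > 0\<close> integrand]
      by (auto intro!: mult_left_mono order_trans[OF norm_triangle_ineq])
    also have "\<dots> = exp (- K * \<bar>t\<bar>) * norm x + C / K"
      by (simp add: algebra_simps mult_exp_exp)
    also have "\<dots> \<le> norm x + C / K"
      using \<open>K > 0\<close> mult_right_mono[of "exp (- K * \<bar>t\<bar>)" 1 "norm x"] by simp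
    finally show ?thesis .
  qed
  then have "bounded (range (weighted_picard K w x g))"
    by (auto simp: bounded_iff)
  moreover have "continuous_on UNIV (weighted_picard K w x g)"
    unfolding weighted_picard_def
    using has_vector_derivative_continuous[OF has_vector_derivative_oriented_integral[OF
          continuous_on_weighted_integrand[OF w g_cont]]]
    by (intro continuous_intros continuous_at_imp_continuous_on) auto
  ultimately show ?thesis by (simp add: bcontfun_def)
qed

lemma dist_weighted_picard:
  fixes w :: "'a::banach \<Rightarrow> 'a"
  assumes lip: "L-lipschitz_on UNIV w" and "K > 0"
    and g1: "continuous_on UNIV g1" and g2: "continuous_on UNIV g2"
    and D: "\<And>s. dist (g1 s) (g2 s) \<le> D"
  shows "dist (weighted_picard K w x g1 t) (weighted_picard K w x g2 t) \<le> L / K * D"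
proof -
  have w: "continuous_on UNIV w"
    using lipschitz_on_continuous_on[OF lip] .
  let ?h = "\<lambda>g s. w (exp (K * \<bar>s\<bar>) *\<^sub>R g s)"
  have h1: "continuous_on UNIV (?h g1)" and h2: "continuous_on UNIV (?h g2)"
    using continuous_on_weighted_integrand[OF w] g1 g2 by auto
  have "norm (?h g1 s - ?h g2 s) \<le> (L * D) * exp (K * \<bar>s\<bar>)" for s
  proof -
    have "norm (?h g1 s - ?h g2 s) \<le> L * (exp (K * \<bar>s\<bar>) * dist (g1 s) (g2 s))"
      using lipschitz_onD[OF lip, of "exp (K * \<bar>s\<bar>) *\<^sub>R g1 s" "exp (K * \<bar>s\<bar>) *\<^sub>R g2 s"]
      by (simp add: dist_norm scaleR_diff_right[symmetric])
    also have "\<dots> \<le> L * (exp (K * \<bar>s\<bar>) * D)"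
      using lipschitz_on_nonneg[OF lip] D[of s] by (intro mult_left_mono) auto
    finally show ?thesis by (simp add: algebra_simps)
  qed
  then have "norm (oriented_integral (\<lambda>s. ?h g1 s - ?h g2 s) t) \<le> L * D / K * exp (K * \<bar>t\<bar>)"
    by (intro norm_oriented_integral_exp_bound \<open>K > 0\<close> continuous_on_diff h1 h2)
  then have "exp (- K * \<bar>t\<bar>) * norm (oriented_integral (?h g1) t - oriented_integral (?h g2) t)
      \<le> exp (- K * \<bar>t\<bar>) * (L * D / K * exp (K * \<bar>t\<bar>))"
    by (intro mult_left_mono) (simp_all add: oriented_integral_diff[OF h1 h2])
  also have "\<dots> = L / K * D"
    by (simp add: mult_exp_exp)
  finally show ?thesis
    by (simp add: weighted_picard_def dist_norm scaleR_diff_right[symmetric])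
qed

lemma lipschitz_global_solution:
  fixes w :: "'a::banach \<Rightarrow> 'a"
  assumes lip: "L-lipschitz_on UNIV w"
  obtains f where "f 0 = x" "\<And>t. (f has_vector_derivative w (f t)) (at t)"
proof -
  define K where "K = 2 * L + 1"
  have "L \<ge> 0" using lipschitz_on_nonneg[OF lip] .
  then have "K > 0" "L / K < 1" by (auto simp: K_def)
  define Q where "Q g = Bcontfun (weighted_picard K w x (apply_bcontfun g))" for g
  have Q: "apply_bcontfun (Q g) = weighted_picard K w x g" for g
    unfolding Q_def
    using weighted_picard_bcontfun[OF lip \<open>K > 0\<close> apply_bcontfun] by (simp add: Bcontfun_inverse)
  have "dist (Q g1) (Q g2) \<le> L / K * dist g1 g2" for g1 g2
    by (intro dist_bound, unfold Q)
       (intro dist_weighted_picard[OF lip \<open>K > 0\<close>] dist_bounded continuous_on_apply_bcontfun)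
  then obtain g where "Q g = g"
    using banach_fix_type[of "L / K" Q] \<open>K > 0\<close> \<open>L \<ge> 0\<close> \<open>L / K < 1\<close> by auto
  define f where "f t = exp (K * \<bar>t\<bar>) *\<^sub>R g t" for t
  have f_eq: "f = (\<lambda>t. x + oriented_integral (\<lambda>s. w (f s)) t)"
  proof
    fix t
    have "f t = exp (K * \<bar>t\<bar>) *\<^sub>R weighted_picard K w x g t"
      using \<open>Q g = g\<close> Q by (metis f_def)
    then show "f t = x + oriented_integral (\<lambda>s. w (f s)) t"
      by (simp add: weighted_picard_def f_def mult_exp_exp)
  qed
  have "continuous_on UNIV (\<lambda>s. w (f s))"
    unfolding f_def
    by (rule continuous_on_weighted_integrand[OF lipschitz_on_continuous_on[OF lip] continuous_on_apply_bcontfun])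
  then have "((\<lambda>t. x + oriented_integral (\<lambda>s. w (f s)) t) has_vector_derivative w (f t)) (at t)" for t
    using has_vector_derivative_add[OF has_vector_derivative_const has_vector_derivative_oriented_integral]
    by fastforce
  then have "(f has_vector_derivative w (f t)) (at t)" for t
    unfolding f_eq[symmetric] .
  moreover have "f 0 = x"
    using fun_cong[OF f_eq, of 0] by (simp add: oriented_integral_def)
  ultimately show ?thesis using that by blast
qed

section \<open>The flow on the sphere\<close>

(* Only the values on S2 matter; the radial extension is globally Lipschitz and tangent to
   every sphere around 0, so its solutions starting on S2 stay on S2. *)
definition radial_extension :: "(pt \<Rightarrow> pt) \<Rightarrow> pt \<Rightarrow> pt" where
  "radial_extension v y = norm y *\<^sub>R v (y /\<^sub>R norm y)"

lemma radial_extension_S2: "y \<in> S2 \<Longrightarrow> radial_extension v y = v y"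
  by (simp add: radial_extension_def mem_S2_iff)

lemma inner_radial_extension:
  assumes "\<forall>x\<in>S2. v x \<bullet> x = 0"
  shows "y \<bullet> radial_extension v y = 0"
proof (cases "y = 0")
  case False
  then have "y /\<^sub>R norm y \<in> S2"
    by (simp add: mem_S2_iff)
  then have "v (y /\<^sub>R norm y) \<bullet> (y /\<^sub>R norm y) = 0"
    using assms by blast
  then show ?thesis
    using False by (simp add: radial_extension_def inner_commute inner_scaleR_right)
qed (simp add: radial_extension_def)

lemma norm_mult_normalized_diff_le:
  fixes a b :: "'a::real_normed_vector"
  assumes "b \<noteq> 0"
  shows "norm a * norm (a /\<^sub>R norm a - b /\<^sub>R norm b) \<le> 2 * norm (a - b)"
proof (cases "a = 0")
  case False
  have "norm a *\<^sub>R (a /\<^sub>R norm a - b /\<^sub>R norm b) = (a - b) + (1 - norm a / norm b) *\<^sub>R b"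
    using False by (simp add: algebra_simps divide_inverse)
  moreover have "\<bar>1 - norm a / norm b\<bar> * norm b = \<bar>norm b - norm a\<bar>"
    using assms by (simp add: abs_mult[symmetric] field_simps)
  ultimately have "norm (norm a *\<^sub>R (a /\<^sub>R norm a - b /\<^sub>R norm b)) \<le> norm (a - b) + \<bar>norm b - norm a\<bar>"
    using norm_triangle_ineq[of "a - b" "(1 - norm a / norm b) *\<^sub>R b"] by simp
  then have "norm a * norm (a /\<^sub>R norm a - b /\<^sub>R norm b) \<le> norm (a - b) + \<bar>norm b - norm a\<bar>"
    by simp
  also have "\<bar>norm b - norm a\<bar> \<le> norm (a - b)"
    by (metis norm_triangle_ineq3 norm_minus_commute)
  finally show ?thesis by simp
qed simp

lemma norm_radial_extension_diff_le:
  assumes lip: "L-lipschitz_on S2 v" and M: "\<And>x. x \<in> S2 \<Longrightarrow> norm (v x) \<le> M" and "b \<noteq> 0"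
  shows "norm (radial_extension v a - radial_extension v b) \<le> (M + 2 * L) * norm (a - b)"
proof -
  have "L \<ge> 0"
    using lipschitz_on_nonneg[OF lip] .
  have unit: "y /\<^sub>R norm y \<in> S2" if "y \<noteq> 0" for y :: pt
    using that by (simp add: mem_S2_iff)
  let ?a = "a /\<^sub>R norm a" and ?b = "b /\<^sub>R norm b"
  have "radial_extension v a - radial_extension v b
      = (norm a - norm b) *\<^sub>R v ?b + norm a *\<^sub>R (v ?a - v ?b)"
    by (simp add: radial_extension_def algebra_simps)
  then have "norm (radial_extension v a - radial_extension v b)
      \<le> \<bar>norm a - norm b\<bar> * norm (v ?b) + norm a * norm (v ?a - v ?b)"
    by (metis norm_scaleR norm_triangle_ineq abs_norm_cancel)
  also have "\<bar>norm a - norm b\<bar> * norm (v ?b) \<le> norm (a - b) * M"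
    using M[OF unit[OF \<open>b \<noteq> 0\<close>]] norm_triangle_ineq3[of a b] by (intro mult_mono) auto
  also have "norm a * norm (v ?a - v ?b) \<le> L * (2 * norm (a - b))"
  proof (cases "a = 0")
    case False
    have "norm a * norm (v ?a - v ?b) \<le> norm a * (L * norm (?a - ?b))"
      using lipschitz_onD[OF lip unit[OF False] unit[OF \<open>b \<noteq> 0\<close>]]
      by (simp add: dist_norm mult_left_mono)
    also have "\<dots> \<le> L * (2 * norm (a - b))"
      using norm_mult_normalized_diff_le[OF \<open>b \<noteq> 0\<close>, of a] \<open>L \<ge> 0\<close>
      by (metis mult.left_commute mult_left_mono)
    finally show ?thesis .
  qed (use \<open>L \<ge> 0\<close> in simp)
  finally show ?thesis by (simp add: algebra_simps)
qed

lemma lipschitz_radial_extension: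
  assumes lip: "L-lipschitz_on S2 v" and M: "\<And>x. x \<in> S2 \<Longrightarrow> norm (v x) \<le> M"
  shows "(M + 2 * L)-lipschitz_on UNIV (radial_extension v)"
proof (rule lipschitz_onI)
  have "norm (v (axis 1 1)) \<le> M"
    using M by (simp add: mem_S2_iff)
  then show "0 \<le> M + 2 * L"
    using lipschitz_on_nonneg[OF lip] norm_ge_zero[of "v (axis 1 1)"] by linarith
  note bound = norm_radial_extension_diff_le[OF lip M]
  fix a b :: pt
  show "dist (radial_extension v a) (radial_extension v b) \<le> (M + 2 * L) * dist a b"
  proof (cases "b = 0")
    case True
    then show ?thesis
      using bound[where a = b and b = a] by (cases "a = 0") (auto simp: dist_norm norm_minus_commute radial_extension_def)
  qed (simp add: bound dist_norm)
qed

lemma solution_exists: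
  assumes v: "smooth_vf v" and x: "x \<in> S2"
  shows "\<exists>\<gamma>. is_solution v \<gamma> \<and> \<gamma> 0 = x"
proof -
  obtain L M where "L-lipschitz_on S2 v" "\<And>x. x \<in> S2 \<Longrightarrow> norm (v x) \<le> M"
    using smooth_vf_lipschitz[OF v] smooth_vf_bounded[OF v] by metis
  from lipschitz_global_solution[OF lipschitz_radial_extension[OF this]]
  obtain f where f0: "f 0 = x" and f: "\<And>t. (f has_vector_derivative radial_extension v (f t)) (at t)"
    by metis
  have "((\<lambda>s. f s \<bullet> f s) has_real_derivative 0) (at t within UNIV)" for t
    using has_real_derivative_inner_self[OF f[of t]] inner_radial_extension[of v "f t"] v
    by (simp add: smooth_vf_def)
  then obtain c where c: "\<And>t. f t \<bullet> f t = c"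
    using has_field_derivative_zero_constant[of UNIV "\<lambda>s. f s \<bullet> f s"] by auto
  have "f t \<in> S2" for t
    using c[of t] c[of 0] f0 x by (simp add: mem_S2_iff norm_eq_sqrt_inner)
  then have "is_solution v f"
    using f by (simp add: is_solution_def radial_extension_S2)
  with f0 show ?thesis by blast
qed

lemma
  assumes "smooth_vf v" "x \<in> S2"
  shows is_solution_flow: "is_solution v (\<lambda>t. flow v t x)" and flow_zero: "flow v 0 x = x"
proof -
  have "(\<lambda>t. flow v t x) = (SOME \<gamma>. is_solution v \<gamma> \<and> \<gamma> 0 = x)"
    by (simp add: flow_def fun_eq_iff)
  with someI_ex[OF solution_exists[OF assms]]
  show "is_solution v (\<lambda>t. flow v t x)" "flow v 0 x = x" by metis+
qed

lemma flow_in_S2: "smooth_vf v \<Longrightarrow> x \<in> S2 \<Longrightarrow> flow v t x \<in> S2"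
  using is_solution_flow by (auto simp: is_solution_def)

lemma solutions_dist_estimate:
  assumes "is_solution v1 \<gamma>1" "is_solution v2 \<gamma>2" "L \<ge> 0"
    and bound: "\<And>a b. a \<in> S2 \<Longrightarrow> b \<in> S2 \<Longrightarrow> norm (v1 a - v2 b) \<le> L * norm (a - b) + \<delta>"
  shows "norm (\<gamma>1 t - \<gamma>2 t)^2 \<le> exp ((2*L + 1) * \<bar>t - t0\<bar>) * (norm (\<gamma>1 t0 - \<gamma>2 t0)^2 + \<delta>^2)"
  using assms by (intro gronwall_dist[OF _ _ bound]) (auto simp: is_solution_def)

lemma solution_unique:
  assumes v: "smooth_vf v" and "is_solution v \<gamma>1" "is_solution v \<gamma>2" "\<gamma>1 t0 = \<gamma>2 t0"
  shows "\<gamma>1 t = \<gamma>2 t"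
proof -
  obtain L where L: "L-lipschitz_on S2 v"
    using smooth_vf_lipschitz[OF v] .
  have "norm (\<gamma>1 t - \<gamma>2 t)^2 \<le> exp ((2*L + 1) * \<bar>t - t0\<bar>) * (norm (\<gamma>1 t0 - \<gamma>2 t0)^2 + 0^2)"
    using assms lipschitz_on_nonneg[OF L] lipschitz_onD[OF L]
    by (intro solutions_dist_estimate) (auto simp: dist_norm)
  then show ?thesis
    using \<open>\<gamma>1 t0 = \<gamma>2 t0\<close> by simp
qed

lemma flow_eq_solution:
  assumes v: "smooth_vf v" and \<gamma>: "is_solution v \<gamma>"
  shows "flow v t (\<gamma> 0) = \<gamma> t"
proof -
  have "\<gamma> 0 \<in> S2"
    using \<gamma> by (simp add: is_solution_def)
  then show ?thesis
    using solution_unique[OF v is_solution_flow[OF v] \<gamma>, of "\<gamma> 0" 0] flow_zero[OF v] by simp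
qed

lemma is_solution_shift:
  assumes "is_solution v \<gamma>"
  shows "is_solution v (\<lambda>s. \<gamma> (s + c))"
  unfolding is_solution_def
proof (intro allI conjI)
  fix s
  show "\<gamma> (s + c) \<in> S2"
    using assms by (simp add: is_solution_def)
  have "(\<gamma> has_vector_derivative v (\<gamma> (s + c))) (at (s + c))"
    using assms by (simp add: is_solution_def)
  then have "((\<gamma> \<circ> (\<lambda>s. s + c)) has_vector_derivative 1 *\<^sub>R v (\<gamma> (s + c))) (at s)"
    by (intro vector_diff_chain_at) (auto intro!: derivative_eq_intros)
  then show "((\<lambda>s. \<gamma> (s + c)) has_vector_derivative v (\<gamma> (s + c))) (at s)"
    by (simp add: o_def)
qed

lemma flow_add:
  assumes "smooth_vf v" "x \<in> S2"
  shows "flow v (s + t) x = flow v s (flow v t x)"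
  using flow_eq_solution[OF assms(1) is_solution_shift[OF is_solution_flow[OF assms]], of s t] by simp

lemma flow_sing:
  assumes "smooth_vf v" "p \<in> sing v"
  shows "flow v t p = p"
  using assms flow_eq_solution[of v "\<lambda>_. p" t] by (simp add: is_solution_def sing_def)

lemma flow_nonsing:
  assumes v: "smooth_vf v" and x: "x \<in> S2" "v x \<noteq> 0"
  shows "v (flow v t x) \<noteq> 0"
proof
  assume "v (flow v t x) = 0"
  then have "flow v (- t) (flow v t x) = flow v t x"
    using flow_sing[OF v] flow_in_S2[OF v x(1)] by (simp add: sing_def)
  then have "x = flow v t x"
    using flow_add[OF v x(1), of "- t" t] flow_zero[OF v x(1)] by simp
  with x(2) \<open>v (flow v t x) = 0\<close> show False by simp
qed

lemma flow_dist_estimate: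
  assumes "smooth_vf v1" "smooth_vf v2" "x1 \<in> S2" "x2 \<in> S2" "L \<ge> 0"
    and "\<And>a b. a \<in> S2 \<Longrightarrow> b \<in> S2 \<Longrightarrow> norm (v1 a - v2 b) \<le> L * norm (a - b) + \<delta>"
  shows "norm (flow v1 t x1 - flow v2 t x2)^2 \<le> exp ((2*L + 1) * \<bar>t\<bar>) * (norm (x1 - x2)^2 + \<delta>^2)"
  using solutions_dist_estimate[OF is_solution_flow is_solution_flow, of v1 x1 v2 x2 L \<delta> t 0] assms
  by (simp add: flow_zero)

lemma continuous_on_flow:
  assumes v: "smooth_vf v"
  shows "continuous_on S2 (flow v t)"
proof -
  obtain L where L: "L-lipschitz_on S2 v"
    using smooth_vf_lipschitz[OF v] .
  define E where "E = exp ((2*L + 1) * \<bar>t\<bar>)"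
  have "dist (flow v t x) (flow v t y) \<le> sqrt E * dist x y" if "x \<in> S2" "y \<in> S2" for x y
  proof -
    have "norm (flow v t x - flow v t y)^2 \<le> E * (norm (x - y)^2 + 0^2)"
      unfolding E_def using that lipschitz_on_nonneg[OF L] lipschitz_onD[OF L]
      by (intro flow_dist_estimate[OF v v]) (auto simp: dist_norm)
    then have "norm (flow v t x - flow v t y) \<le> sqrt (E * norm (x - y)^2)"
      by (intro real_le_rsqrt) simp
    then show ?thesis
      by (simp add: dist_norm real_sqrt_mult)
  qed
  then have "(sqrt E)-lipschitz_on S2 (flow v t)"
    by (intro lipschitz_onI) (auto simp: E_def)
  then show ?thesis
    by (rule lipschitz_on_continuous_on)
qed

lemma continuous_on_flow_time:
  assumes "smooth_vf v" "x \<in> S2"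
  shows "continuous_on UNIV (\<lambda>t. flow v t x)"
  using is_solution_flow[OF assms]
  by (metis has_vector_derivative_continuous continuous_at_imp_continuous_on is_solution_def)

section \<open>Invariance and closedness of ELBS\<close>

lemma flow_limit_set_shift:
  fixes F :: "real filter"
  assumes v: "smooth_vf v" and x: "x \<in> S2"
    and shift: "\<And>ts c. filterlim ts F sequentially \<Longrightarrow> filterlim (\<lambda>n. c + ts n) F sequentially"
  shows "{y. \<exists>ts. filterlim ts F sequentially \<and> (\<lambda>n. flow v (ts n) (flow v t x)) \<longlonglongrightarrow> y}
       = {y. \<exists>ts. filterlim ts F sequentially \<and> (\<lambda>n. flow v (ts n) x) \<longlonglongrightarrow> y}"
proof -
  have flow_shift: "flow v s (flow v t x) = flow v (t + s) x" for s
    using flow_add[OF v x] by (simp add: add.commute)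
  show ?thesis
  proof (intro Collect_cong iffI; elim exE conjE)
    fix y ts
    assume "filterlim ts F sequentially" "(\<lambda>n. flow v (ts n) (flow v t x)) \<longlonglongrightarrow> y"
    then show "\<exists>ts. filterlim ts F sequentially \<and> (\<lambda>n. flow v (ts n) x) \<longlonglongrightarrow> y"
      by (intro exI[of _ "\<lambda>n. t + ts n"]) (simp add: shift flow_shift)
  next
    fix y ts
    assume "filterlim ts F sequentially" "(\<lambda>n. flow v (ts n) x) \<longlonglongrightarrow> y"
    then show "\<exists>ts. filterlim ts F sequentially \<and> (\<lambda>n. flow v (ts n) (flow v t x)) \<longlonglongrightarrow> y"
      using shift[of ts "- t"] by (intro exI[of _ "\<lambda>n. - t + ts n"]) (simp add: flow_shift)
  qed
qed

lemma omega_limit_flow: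
  assumes "smooth_vf v" "x \<in> S2"
  shows "omega_limit v (flow v t x) = omega_limit v x"
  unfolding omega_limit_def
  by (rule flow_limit_set_shift[OF assms])
     (simp add: filterlim_tendsto_add_at_top_iff[OF tendsto_const])

lemma alpha_limit_flow:
  assumes "smooth_vf v" "x \<in> S2"
  shows "alpha_limit v (flow v t x) = alpha_limit v x"
  unfolding alpha_limit_def
  by (rule flow_limit_set_shift[OF assms])
     (simp add: filterlim_tendsto_add_at_bot_iff[OF tendsto_const])

lemma invariant_Un: "invariant v A \<Longrightarrow> invariant v B \<Longrightarrow> invariant v (A \<union> B)"
  by (auto simp: invariant_def)

lemma invariant_Int: "invariant v A \<Longrightarrow> invariant v B \<Longrightarrow> invariant v (A \<inter> B)"
  by (auto simp: invariant_def)

lemma invariant_Union: "(\<And>A. A \<in> \<A> \<Longrightarrow> invariant v A) \<Longrightarrow> invariant v (\<Union>\<A>)"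
  unfolding invariant_def by blast

lemma invariant_sing_subset: "smooth_vf v \<Longrightarrow> A \<subseteq> sing v \<Longrightarrow> invariant v A"
  by (auto simp: invariant_def flow_sing sing_def)

lemma invariant_orbit:
  assumes "smooth_vf v" "x \<in> S2"
  shows "invariant v (orbit v x)"
  using flow_add[OF assms, symmetric] flow_in_S2[OF assms]
  by (auto simp: invariant_def orbit_def)

lemma invariant_closure:
  assumes v: "smooth_vf v" and A: "invariant v A"
  shows "invariant v (closure A)"
proof -
  have "closure A \<subseteq> S2"
    using A closed_S2 by (simp add: invariant_def closure_minimal)
  moreover have "flow v t ` closure A \<subseteq> closure A" for t
    using A continuous_on_subset[OF continuous_on_flow[OF v] \<open>closure A \<subseteq> S2\<close>]
    by (intro image_closure_subset) (auto simp: invariant_def intro: closure_subset[THEN subsetD])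
  ultimately show ?thesis
    by (auto simp: invariant_def)
qed

lemma invariant_cycle: "smooth_vf v \<Longrightarrow> cycle v C \<Longrightarrow> invariant v C"
  by (auto simp: cycle_def intro: invariant_orbit)

lemma invariant_Sep:
  assumes "smooth_vf v"
  shows "invariant v (Sep v)"
  unfolding Sep_def
  by (intro invariant_Union) (auto intro!: invariant_orbit[OF assms] simp: hyp_sector_def)

lemma invariant_interesting_points:
  assumes v: "smooth_vf v"
  shows "invariant v {x \<in> S2. v x \<noteq> 0 \<and> \<not> noninteresting_alpha v x \<and> \<not> noninteresting_omega v x}"
  using flow_in_S2[OF v] flow_nonsing[OF v] alpha_limit_flow[OF v] omega_limit_flow[OF v]
  by (auto simp: invariant_def noninteresting_alpha_def noninteresting_omega_def)

lemma invariant_ELBS: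
  assumes v: "smooth_vf v"
  shows "invariant v (ELBS v)"
  unfolding ELBS_def
proof (intro invariant_Un invariant_closure[OF v] invariant_interesting_points[OF v])
  show "invariant v {p \<in> sing v. \<not> hyp_sing v p}"
    by (rule invariant_sing_subset[OF v]) auto
  show "invariant v (\<Union>{C. limit_cycle v C \<and> \<not> hyp_cycle v C})"
    using invariant_cycle[OF v] by (intro invariant_Union) (simp add: limit_cycle_def)
qed

lemma flow_periodic:
  assumes v: "smooth_vf v" and x: "x \<in> S2" and T: "flow v T x = x"
  shows "flow v (s + of_int k * T) x = flow v s x"
proof -
  have nat: "flow v (s + of_nat n * T) x = flow v s x" for s n
  proof (induction n)
    case (Suc n)
    have "flow v (s + of_nat (Suc n) * T) x = flow v (s + of_nat n * T) (flow v T x)"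
      using flow_add[OF v x, of "s + of_nat n * T" T] by (simp add: algebra_simps)
    with Suc T show ?case by simp
  qed simp
  show ?thesis
  proof (cases "k \<ge> 0")
    case True
    then show ?thesis using nat[of s "nat k"] by simp
  next
    case False
    then show ?thesis using nat[of "s + of_int k * T" "nat (- k)"] by simp
  qed
qed

lemma orbit_periodic:
  assumes "smooth_vf v" "x \<in> S2" "T > 0" "flow v T x = x"
  shows "orbit v x = (\<lambda>s. flow v s x) ` {0..T}"
proof -
  have "flow v s x \<in> (\<lambda>s. flow v s x) ` {0..T}" for s
  proof -
    have "s = T * frac (s / T) + of_int \<lfloor>s / T\<rfloor> * T"
      using \<open>T > 0\<close> by (simp add: frac_def algebra_simps)
    then have "flow v s x = flow v (T * frac (s / T)) x"
      using flow_periodic[OF assms(1,2,4)] by metis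
    moreover have "T * frac (s / T) \<in> {0..T}"
      using \<open>T > 0\<close> frac_lt_1[of "s / T"] by (simp add: frac_ge_0 less_imp_le)
    ultimately show ?thesis by blast
  qed
  then show ?thesis
    by (auto simp: orbit_def)
qed

lemma closed_cycle:
  assumes v: "smooth_vf v" and "cycle v C"
  shows "closed C"
proof -
  obtain x T where x: "x \<in> S2" and "T > 0" "flow v T x = x" and C: "C = orbit v x"
    using \<open>cycle v C\<close> by (auto simp: cycle_def)
  have "compact ((\<lambda>s. flow v s x) ` {0..T})"
    by (intro compact_continuous_image continuous_on_subset[OF continuous_on_flow_time[OF v x]]) auto
  then show ?thesis
    using orbit_periodic[OF v x \<open>T > 0\<close> \<open>flow v T x = x\<close>] C by (simp add: compact_imp_closed)
qed

lemma closed_sing: "smooth_vf v \<Longrightarrow> closed (sing v)"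
  unfolding sing_def by (rule continuous_closed_preimage_constant[OF continuous_on_smooth_vf closed_S2])

lemma finite_sing:
  assumes "vect_star v"
  shows "finite (sing v)"
proof (rule ccontr)
  assume "infinite (sing v)"
  moreover have v: "smooth_vf v"
    using assms by (simp add: vect_star_def)
  ultimately obtain x where x: "x islimpt sing v"
    using compact_eq_Bolzano_Weierstrass[of S2] compact_S2 by (auto simp: sing_def)
  then have "x \<in> sing v"
    using closed_sing[OF v] closed_limpt by blast
  then obtain d where "d > 0" "\<And>q. q \<in> sing v \<Longrightarrow> dist q x < d \<Longrightarrow> q = x"
    using assms by (auto simp: vect_star_def isolated_sing_def)
  with x show False
    by (auto simp: islimpt_approachable)
qed

lemma closed_ELBS:
  assumes "vect_star v"
  shows "closed (ELBS v)"
proof -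
  have v: "smooth_vf v"
    using assms by (simp add: vect_star_def)
  have "closed {p \<in> sing v. \<not> hyp_sing v p}"
    by (rule finite_imp_closed, rule finite_subset[OF _ finite_sing[OF assms]]) auto
  moreover have "finite {C. limit_cycle v C \<and> \<not> hyp_cycle v C}"
    using assms by (auto simp: vect_star_def limit_cycle_def elim: rev_finite_subset)
  then have "closed (\<Union>{C. limit_cycle v C \<and> \<not> hyp_cycle v C})"
    by (rule closed_Union) (auto simp: limit_cycle_def intro: closed_cycle[OF v])
  ultimately show ?thesis
    by (simp add: ELBS_def closed_Un)
qed

section \<open>Families of vector fields\<close>

lemma smooth_vf_family:
  "family_star r V \<Longrightarrow> e \<in> ball 0 r \<Longrightarrow> smooth_vf (V e)"
  by (simp add: family_star_def vect_star_def)

lemma vect_star_family_0: "family_star r V \<Longrightarrow> vect_star (V 0)"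
  by (simp add: family_star_def)

lemma family_uniformly_close:
  fixes V :: "real^'n \<Rightarrow> pt \<Rightarrow> pt"
  assumes F: "family_star r V" and "\<epsilon> > 0"
  obtains \<rho> where "\<rho> > 0" "\<And>e a. norm e < \<rho> \<Longrightarrow> a \<in> S2 \<Longrightarrow> norm (V e a - V 0 a) < \<epsilon>"
proof -
  obtain U where U: "ball 0 r \<times> S2 \<subseteq> U" "smooth_on U (\<lambda>(e, x). V e x)"
    and "r > 0"
    using F by (auto simp: family_star_def)
  define K where "K = cball (0::real^'n) (r/2) \<times> S2"
  have "compact K" "K \<subseteq> U"
    using U(1) \<open>r > 0\<close> by (auto simp: K_def compact_Times compact_S2)
  moreover have "continuous_on U (\<lambda>(e, x). V e x)"
    using U(2) by (metis smooth_on_def Ck_on.simps(1))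
  ultimately have "uniformly_continuous_on K (\<lambda>(e, x). V e x)"
    using compact_uniformly_continuous continuous_on_subset by blast
  then obtain d where "d > 0"
    and d: "\<And>p q. p \<in> K \<Longrightarrow> q \<in> K \<Longrightarrow> dist q p < d \<Longrightarrow> dist ((\<lambda>(e, x). V e x) q) ((\<lambda>(e, x). V e x) p) < \<epsilon>"
    unfolding uniformly_continuous_on_def using \<open>\<epsilon> > 0\<close> by metis
  show ?thesis
  proof
    show "min d (r/2) > 0"
      using \<open>d > 0\<close> \<open>r > 0\<close> by simp
    fix e :: "real^'n" and a assume "norm e < min d (r/2)" "a \<in> S2"
    then have "(0, a) \<in> K" "(e, a) \<in> K" "dist (e, a) (0, a) < d"
      using \<open>r > 0\<close> by (auto simp: K_def dist_Pair_Pair)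
    then show "norm (V e a - V 0 a) < \<epsilon>"
      using d by (fastforce simp: dist_norm)
  qed
qed

lemma flow_family_tendsto:
  fixes V :: "real^'n \<Rightarrow> pt \<Rightarrow> pt"
  assumes F: "family_star r V" and e: "e \<longlonglongrightarrow> 0" "\<And>k. e k \<in> ball 0 r"
    and y: "\<And>k. y k \<in> S2" "y \<longlonglongrightarrow> x" and x: "x \<in> S2"
  shows "(\<lambda>k. flow (V (e k)) t (y k)) \<longlonglongrightarrow> flow (V 0) t x"
proof (rule tendstoI)
  fix \<eta> :: real assume "\<eta> > 0"
  have v0: "smooth_vf (V 0)"
    using vect_star_family_0[OF F] by (simp add: vect_star_def)
  obtain L where L: "L-lipschitz_on S2 (V 0)"
    using smooth_vf_lipschitz[OF v0] .
  define E where "E = exp ((2*L + 1) * \<bar>t\<bar>)"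
  define \<epsilon> where "\<epsilon> = sqrt (\<eta>^2 / (4 * E))"
  have "E > 0" "\<epsilon> > 0" "\<epsilon>^2 = \<eta>^2 / (4 * E)"
    using \<open>\<eta> > 0\<close> by (auto simp: E_def \<epsilon>_def)
  obtain \<rho> where "\<rho> > 0" and close: "\<And>e a. norm e < \<rho> \<Longrightarrow> a \<in> S2 \<Longrightarrow> norm (V e a - V 0 a) < \<epsilon>"
    using family_uniformly_close[OF F \<open>\<epsilon> > 0\<close>] by metis
  have "\<forall>\<^sub>F k in sequentially. norm (e k) < \<rho> \<and> dist (y k) x < \<epsilon>"
    using tendstoD[OF e(1) \<open>\<rho> > 0\<close>] tendstoD[OF y(2) \<open>\<epsilon> > 0\<close>] by (auto elim: eventually_elim2)
  then show "\<forall>\<^sub>F k in sequentially. dist (flow (V (e k)) t (y k)) (flow (V 0) t x) < \<eta>"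
  proof (rule eventually_mono, elim conjE)
    fix k assume "norm (e k) < \<rho>" "dist (y k) x < \<epsilon>"
    have "norm (V (e k) a - V 0 b) \<le> L * norm (a - b) + \<epsilon>" if "a \<in> S2" "b \<in> S2" for a b
      using close[OF \<open>norm (e k) < \<rho>\<close> that(1)] lipschitz_onD[OF L that]
        norm_triangle_ineq[of "V (e k) a - V 0 a" "V 0 a - V 0 b"]
      by (simp add: dist_norm)
    then have "norm (flow (V (e k)) t (y k) - flow (V 0) t x)^2 \<le> E * (norm (y k - x)^2 + \<epsilon>^2)"
      unfolding E_def
      by (intro flow_dist_estimate smooth_vf_family[OF F e(2)] v0 y(1) x lipschitz_on_nonneg[OF L])
    also have "\<dots> \<le> E * (\<epsilon>^2 + \<epsilon>^2)"
      using \<open>dist (y k) x < \<epsilon>\<close> \<open>E > 0\<close> by (simp add: dist_norm power_mono)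
    also have "\<dots> < \<eta>^2"
      using \<open>E > 0\<close> \<open>\<eta> > 0\<close> by (simp add: \<open>\<epsilon>^2 = \<eta>^2 / (4 * E)\<close>)
    finally show "dist (flow (V (e k)) t (y k)) (flow (V 0) t x) < \<eta>"
      using \<open>\<eta> > 0\<close> by (simp add: dist_norm power_less_imp_less_base)
  qed
qed

definition family_invariant :: "real \<Rightarrow> (real^'n \<Rightarrow> pt \<Rightarrow> pt) \<Rightarrow> ((real^'n) \<times> pt) set \<Rightarrow> bool" where
  "family_invariant r V X \<longleftrightarrow> (\<forall>(e, x) \<in> X. e \<in> ball 0 r \<and> x \<in> S2 \<and> (\<forall>t. (e, flow (V e) t x) \<in> X))"

lemma family_invariant_fibrewise:
  assumes "\<And>e. e \<in> ball 0 r \<Longrightarrow> invariant (V e) (A e)"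
  shows "family_invariant r V {(e, x). e \<in> ball 0 r \<and> x \<in> A e}"
  using assms by (auto simp: family_invariant_def invariant_def)

lemma family_invariant_PerF:
  assumes "family_star r V"
  shows "family_invariant r V (PerF r V)"
proof -
  have PerF: "PerF r V = {(e, x). e \<in> ball 0 r \<and> x \<in> \<Union>{C. limit_cycle (V e) C}}"
    by (auto simp: PerF_def)
  have "invariant (V e) (\<Union>{C. limit_cycle (V e) C})" if "e \<in> ball 0 r" for e
    using invariant_cycle[OF smooth_vf_family[OF assms that]]
    by (intro invariant_Union) (simp add: limit_cycle_def)
  then show ?thesis
    unfolding PerF by (rule family_invariant_fibrewise)
qed

lemma family_invariant_SepF:
  assumes "family_star r V"
  shows "family_invariant r V (SepF r V)"
  unfolding SepF_def
  by (rule family_invariant_fibrewise, rule invariant_Sep, erule smooth_vf_family[OF assms])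

lemma invariant_slice_closure:
  fixes V :: "real^'n \<Rightarrow> pt \<Rightarrow> pt"
  assumes F: "family_star r V" and X: "family_invariant r V X"
  shows "invariant (V 0) {x. (0, x) \<in> closure X}"
  unfolding invariant_def
proof (intro conjI ballI allI)
  have X': "\<forall>p\<in>X. fst p \<in> ball 0 r \<and> snd p \<in> S2 \<and> (\<forall>t. (fst p, flow (V (fst p)) t (snd p)) \<in> X)"
    using X by (simp add: family_invariant_def case_prod_beta)
  then have "X \<subseteq> UNIV \<times> S2"
    by (auto simp: subset_iff mem_Times_iff)
  then have "closure X \<subseteq> UNIV \<times> S2"
    by (rule closure_minimal) (simp add: closed_Times closed_S2)
  then show slice: "{x. (0, x) \<in> closure X} \<subseteq> S2"
    by auto
  fix x t assume x: "x \<in> {x. (0, x) \<in> closure X}"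
  then obtain s where s: "\<And>k. s k \<in> X" "s \<longlonglongrightarrow> (0, x)"
    unfolding mem_Collect_eq closure_sequential by blast
  define e y where "e k = fst (s k)" and "y k = snd (s k)" for k
  have in_X: "e k \<in> ball 0 r" "y k \<in> S2" "(e k, flow (V (e k)) t (y k)) \<in> X" for k
    using X' s(1)[of k] by (simp_all add: e_def y_def)
  have "e \<longlonglongrightarrow> 0" "y \<longlonglongrightarrow> x"
    using tendsto_fst[OF s(2)] tendsto_snd[OF s(2)] by (simp_all add: e_def[abs_def] y_def[abs_def])
  moreover have "x \<in> S2"
    using x slice by blast
  ultimately have "(\<lambda>k. flow (V (e k)) t (y k)) \<longlonglongrightarrow> flow (V 0) t x"
    by (intro flow_family_tendsto[OF F _ in_X(1) in_X(2)])
  with \<open>e \<longlonglongrightarrow> 0\<close> have "(\<lambda>k. (e k, flow (V (e k)) t (y k))) \<longlonglongrightarrow> (0, flow (V 0) t x)"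
    by (rule tendsto_Pair)
  then have "(0, flow (V 0) t x) \<in> closure X"
    unfolding closure_sequential using in_X(3)
    by (intro exI[of _ "\<lambda>k. (e k, flow (V (e k)) t (y k))"]) blast
  then show "flow (V 0) t x \<in> {x. (0, x) \<in> closure X}"
    by simp
qed

lemma closed_slice:
  fixes S :: "('a::metric_space \<times> 'b::metric_space) set"
  shows "closed S \<Longrightarrow> closed {x. (a, x) \<in> S}"
  using continuous_closed_vimage[of S "\<lambda>x. (a, x)"] by (simp add: vimage_def continuous_intros)

lemma closed_LBS:
  assumes "family_star r V"
  shows "closed (LBS r V)"
proof -
  have "vect_star (V 0)"
    using vect_star_family_0[OF assms] .
  then have "smooth_vf (V 0)"
    by (simp add: vect_star_def)
  show ?thesis
    unfolding LBS_def Collect_disj_eq mem_Collect_eq Un_iff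
    by (intro closed_Int closed_Un closed_ELBS[OF \<open>vect_star (V 0)\<close>] closed_sing[OF \<open>smooth_vf (V 0)\<close>]
        closed_slice closed_closure)
qed

lemma invariant_LBS:
  assumes "family_star r V"
  shows "invariant (V 0) (LBS r V)"
proof -
  have v0: "smooth_vf (V 0)"
    using vect_star_family_0[OF assms] by (simp add: vect_star_def)
  have "LBS r V = ELBS (V 0) \<inter> (sing (V 0) \<union>
      ({x. (0, x) \<in> closure (PerF r V)} \<union> {x. (0, x) \<in> closure (SepF r V)}))"
    by (auto simp: LBS_def)
  moreover have "invariant (V 0) {x. (0, x) \<in> closure (PerF r V)}"
    by (rule invariant_slice_closure[OF assms family_invariant_PerF[OF assms]])
  moreover have "invariant (V 0) {x. (0, x) \<in> closure (SepF r V)}"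
    by (rule invariant_slice_closure[OF assms family_invariant_SepF[OF assms]])
  ultimately show ?thesis
    using invariant_ELBS[OF v0] invariant_sing_subset[OF v0 order_refl]
    by (simp add: invariant_Int invariant_Un)
qed

theorem mainTheorem5:
  fixes V :: "real^'n \<Rightarrow> pt \<Rightarrow> pt" and r :: real
  assumes "family_star r V"
  shows "closed (ELBS (V 0)) \<and> invariant (V 0) (ELBS (V 0)) \<and>
         closed (LBS r V) \<and> invariant (V 0) (LBS r V)"
proof -
  have "vect_star (V 0)"
    using vect_star_family_0[OF assms] .
  then show ?thesis
    using closed_ELBS invariant_ELBS closed_LBS[OF assms] invariant_LBS[OF assms]
    by (simp add: vect_star_def)
qed

end
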